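(* Let $K\ge2$ and $\tilde a_1,\dots,\tilde a_K\in\mathbb{R}$ satisfy $\sum_{j=i}^K\tilde a_j>0$ for all $i\in\{1,\dots,K\}$. There are $t_0,D_3\in(0,\infty)$ such that for every $t\in[t_0,\infty)$, every admissible $n$ and every $\mathbf z\in G^n$, $$\mathbb{E}_{\mathbf z}|\hat{\mathbf Z}^n(|\mathbf z|t)|^2\le D_3\Big(t|\mathbf z|+\frac{1+t^2(|\mathbf z|^2+1)}{n}\Big).$$
   Context: Only integers $n>\max_l(\max(\tilde a_l,0))^2$ are considered. Let $A_1,\dots,A_K,D_1,\dots,D_K$ be mutually independent rate-one Poisson processes. The ranked queue-length process $\mathbf X^n=(X^n_1,\dots,X^n_K)'$ (with $X^n_1(0)\le\dots\le X^n_K(0)$ nonnegative integers) solves $$X^n_i(t)=X^n_i(0)+A_i\Big(n\int_0^t\alpha^n_i(s)\mathbf 1_{\{X^n_i(s)<X^n_{i+1}(s)\}}ds\Big)-D_i\Big(n\int_0^t\delta^n_i(s)\mathbf 1_{\{X^n_i(s)>X^n_{i-1}(s)\}}ds\Big),$$ with $X^n_0\equiv0$, $X^n_{K+1}\equiv\infty$, $\delta^n_i(t)=\sum_{j}\mathbf 1_{\{X^n_j(t)=X^n_i(t)\}}$, $\alpha^n_i(t)=\sum_j(1-\tilde a_jn^{-1/2})\mathbf 1_{\{X^n_j(t)=X^n_i(t)\}}$. The gap process $\hat{\mathbf Z}^n(t)=n^{-1/2}(X^n_1(t),X^n_2(t)-X^n_1(t),\dots,X^n_K(t)-X^n_{K-1}(t))'$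 is a Markov process on $G^n=n^{-1/2}\mathbb{N}_0^K$; $\mathbb{E}_{\mathbf z}$ denotes expectation when $\hat{\mathbf Z}^n(0)=\mathbf z$. $|\cdot|$ is the Euclidean norm. *)

theory Defs
  imports "HOL-Analysis.Analysis"
begin

text \<open>States of the ranked queue-length process X^n: functions x :: nat => nat,
  components x 1 <= ... <= x K, and x i = 0 outside {1..K} (so x 0 = 0 = X^n_0).\<close>
definition ranked_state :: "nat \<Rightarrow> (nat \<Rightarrow> nat) \<Rightarrow> bool" where
  "ranked_state K x \<longleftrightarrow> (\<forall>i. i \<notin> {1..K} \<longrightarrow> x i = 0) \<and> (\<forall>i\<in>{1..<K}. x i \<le> x (Suc i))"

definition alpha_rate :: "nat \<Rightarrow> (nat \<Rightarrow> real) \<Rightarrow> nat \<Rightarrow> (nat \<Rightarrow> nat) \<Rightarrow> nat \<Rightarrow> real" where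
  "alpha_rate K a n x i = (\<Sum>j\<in>{j\<in>{1..K}. x j = x i}. 1 - a j / sqrt (real n))"

definition delta_rate :: "nat \<Rightarrow> (nat \<Rightarrow> nat) \<Rightarrow> nat \<Rightarrow> real" where
  "delta_rate K x i = real (card {j\<in>{1..K}. x j = x i})"

text \<open>Jump intensities: X_i increases by one at rate n alpha_i 1{X_i < X_(i+1)} (X_(K+1) = infinity),
  decreases by one at rate n delta_i 1{X_i > X_(i-1)} (X_0 = 0).\<close>
definition up_rate :: "nat \<Rightarrow> (nat \<Rightarrow> real) \<Rightarrow> nat \<Rightarrow> (nat \<Rightarrow> nat) \<Rightarrow> nat \<Rightarrow> real" where
  "up_rate K a n x i = (if i = K \<or> x i < x (Suc i) then real n * alpha_rate K a n x i else 0)"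

definition down_rate :: "nat \<Rightarrow> nat \<Rightarrow> (nat \<Rightarrow> nat) \<Rightarrow> nat \<Rightarrow> real" where
  "down_rate K n x i = (if (if i = 1 then 0 else x (i - 1)) < x i then real n * delta_rate K x i else 0)"

definition generator :: "nat \<Rightarrow> (nat \<Rightarrow> real) \<Rightarrow> nat \<Rightarrow> ((nat \<Rightarrow> nat) \<Rightarrow> real) \<Rightarrow> (nat \<Rightarrow> nat) \<Rightarrow> real" where
  "generator K a n f x =
     (\<Sum>i=1..K. up_rate K a n x i * (f (x(i := Suc (x i))) - f x)
              + down_rate K n x i * (f (x(i := x i - 1)) - f x))"

text \<open>Uniformization constant: an upper bound of the total jump rate.\<close>
definition unif_rate :: "nat \<Rightarrow> (nat \<Rightarrow> real) \<Rightarrow> nat \<Rightarrow> real" where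
  "unif_rate K a n = real n * (2 * real K + (\<Sum>j=1..K. \<bar>a j\<bar>))"

definition jump_op :: "nat \<Rightarrow> (nat \<Rightarrow> real) \<Rightarrow> nat \<Rightarrow> ((nat \<Rightarrow> nat) \<Rightarrow> real) \<Rightarrow> (nat \<Rightarrow> nat) \<Rightarrow> real" where
  "jump_op K a n f x = f x + generator K a n f x / unif_rate K a n"

text \<open>Expectation E_x f(X^n(s)) for the chain started at x, via the transition semigroup
  (uniformization): sum_k e^(-Lambda s) (Lambda s)^k / k! (J^k f)(x).\<close>
definition expect_at :: "nat \<Rightarrow> (nat \<Rightarrow> real) \<Rightarrow> nat \<Rightarrow> (nat \<Rightarrow> nat) \<Rightarrow> real \<Rightarrow> ((nat \<Rightarrow> nat) \<Rightarrow> real) \<Rightarrow> real" where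
  "expect_at K a n x s f =
     (\<Sum>k. exp (- unif_rate K a n * s) * (unif_rate K a n * s) ^ k / fact k * (((jump_op K a n) ^^ k) f) x)"

definition zhat_normsq :: "nat \<Rightarrow> nat \<Rightarrow> (nat \<Rightarrow> nat) \<Rightarrow> real" where
  "zhat_normsq K n x = (\<Sum>i=1..K. (real (x i) - (if i = 1 then 0 else real (x (i - 1))))\<^sup>2) / real n"

definition admissible :: "nat \<Rightarrow> (nat \<Rightarrow> real) \<Rightarrow> nat \<Rightarrow> bool" where
  "admissible K a n \<longleftrightarrow> n \<ge> 1 \<and> (\<forall>l\<in>{1..K}. (max (a l) 0)\<^sup>2 < real n)"

end

theory Submission
  imports Defs
begin

text \<open>
  By uniformization, \<open>E\<^sub>x f (X s)\<close> is the Poisson(\<open>\<Lambda> s\<close>) average of \<open>J\<^sup>k f x\<close>, where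
  \<open>J = I + Q / \<Lambda>\<close> is a positive operator on ranked states. Hence any family \<open>\<psi>\<^sub>k\<close> with
  \<open>f \<le> \<psi>\<^sub>0\<close> and \<open>J \<psi>\<^sub>k \<le> \<psi>\<^sub>k\<^sub>+\<^sub>1\<close> bounds the iterates, and bounds quadratic in \<open>k\<close> are
  averaged by the first two Poisson moments.

  Abel summation and the positive tail sums give \<open>\<Sum> a\<^sub>j x\<^sub>j \<ge> \<alpha> x\<^sub>K\<close>, so the generator of
  \<open>g = \<Sum> x\<^sub>i\<^sup>2\<close> is at most \<open>\<Lambda>\<close>, and \<open>\<psi>\<^sub>k = (g + k) / n\<close> handles \<open>|z| < 1\<close>. Far from the origin the
  drift of \<open>g\<close> is strongly negative, so \<open>V = sqrt (g + B n)\<close> satisfies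
  \<open>J (V - c)\<^sub>+\<^sup>2 \<le> (V - c - \<beta>)\<^sub>+\<^sup>2 + D\<close>, giving \<open>\<psi>\<^sub>k = ((V - \<beta> k)\<^sub>+\<^sup>2 + D k) / n\<close>. For \<open>|z| \<ge> 1\<close> and \<open>t \<ge> t\<^sub>0\<close> one has \<open>V x \<le> \<beta> \<Lambda> |z| t\<close>,
  and the Poisson second moment yields \<open>D\<^sub>3 t |z|\<close>.
\<close>

section \<open>Poisson moments\<close>

lemma exp_series_sums: "(\<lambda>k. (l::real) ^ k / fact k) sums exp l"
  using exp_converges[of l] by (simp add: divide_inverse mult.commute)

lemma poisson_first_moment_sums: "(\<lambda>k. real k * (l::real) ^ k / fact k) sums (l * exp l)"
proof -
  have "(\<lambda>m. real (Suc m) * l ^ Suc m / fact (Suc m)) = (\<lambda>m. l * (l ^ m / fact m))"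
    by (simp add: field_simps del: of_nat_Suc)
  then have "(\<lambda>m. real (Suc m) * l ^ Suc m / fact (Suc m)) sums (l * exp l)"
    using sums_mult[OF exp_series_sums] by simp
  then show ?thesis by (subst (asm) sums_Suc_iff) simp
qed

lemma poisson_second_factorial_moment_sums:
  "(\<lambda>k. real k * (real k - 1) * (l::real) ^ k / fact k) sums (l * (l * exp l))"
proof -
  have "(\<lambda>m. real (Suc m) * (real (Suc m) - 1) * l ^ Suc m / fact (Suc m))
      = (\<lambda>m. l * (real m * l ^ m / fact m))"
    by (rule ext) (simp add: divide_simps)
  then have "(\<lambda>m. real (Suc m) * (real (Suc m) - 1) * l ^ Suc m / fact (Suc m)) sums (l * (l * exp l))"
    using sums_mult[OF poisson_first_moment_sums] by simp
  then show ?thesis by (subst (asm) sums_Suc_iff) simp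
qed

lemma poisson_quadratic_sums:
  "(\<lambda>k. exp (-l) * (l::real) ^ k / fact k * (A * (real k - l)\<^sup>2 + B * real k + C)) sums (A * l + B * l + C)"
proof -
  have "(\<lambda>k. exp (-l) * (A * (real k * (real k - 1) * l ^ k / fact k)
        + (A + B - 2 * A * l) * (real k * l ^ k / fact k) + (A * l\<^sup>2 + C) * (l ^ k / fact k)))
      sums (exp (-l) * (A * (l * (l * exp l)) + (A + B - 2 * A * l) * (l * exp l) + (A * l\<^sup>2 + C) * exp l))"
    by (intro sums_mult sums_add poisson_first_moment_sums poisson_second_factorial_moment_sums
        exp_series_sums)
  moreover have "exp (-l) * (A * (l * (l * exp l)) + (A + B - 2 * A * l) * (l * exp l) + (A * l\<^sup>2 + C) * exp l)
      = A * l + B * l + C"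
    by (simp add: exp_minus field_simps power2_eq_square)
  moreover have "(\<lambda>k. exp (-l) * (A * (real k * (real k - 1) * l ^ k / fact k)
        + (A + B - 2 * A * l) * (real k * l ^ k / fact k) + (A * l\<^sup>2 + C) * (l ^ k / fact k)))
      = (\<lambda>k. exp (-l) * l ^ k / fact k * (A * (real k - l)\<^sup>2 + B * real k + C))"
    by (rule ext) (simp add: field_simps power2_eq_square)
  ultimately show ?thesis by simp
qed

lemma poisson_expectation_le_quadratic:
  fixes l A B C :: real and w :: "nat \<Rightarrow> real"
  assumes "0 \<le> l" and "\<And>k. 0 \<le> w k"
    and "\<And>k. w k \<le> A * (real k - l)\<^sup>2 + B * real k + C"
  shows "(\<Sum>k. exp (-l) * l ^ k / fact k * w k) \<le> A * l + B * l + C"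
proof -
  let ?u = "\<lambda>k. exp (-l) * l ^ k / fact k * (A * (real k - l)\<^sup>2 + B * real k + C)"
  have u_sums: "?u sums (A * l + B * l + C)"
    by (rule poisson_quadratic_sums)
  have weight_nonneg: "0 \<le> exp (-l) * l ^ k / fact k" for k
    using assms(1) by simp
  have le: "exp (-l) * l ^ k / fact k * w k \<le> ?u k" for k
    using assms(3) weight_nonneg by (rule mult_left_mono)
  have "summable (\<lambda>k. exp (-l) * l ^ k / fact k * w k)"
  proof (rule summable_comparison_test'[OF sums_summable[OF u_sums]])
    show "norm (exp (-l) * l ^ k / fact k * w k) \<le> ?u k" for k
      using le[of k] mult_nonneg_nonneg[OF weight_nonneg assms(2)] by (metis abs_of_nonneg real_norm_def)
  qed
  then have "(\<Sum>k. exp (-l) * l ^ k / fact k * w k) \<le> suminf ?u"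
    using le sums_summable[OF u_sums] by (intro suminf_le)
  then show ?thesis
    using u_sums by (simp add: sums_iff)
qed

section \<open>Ranked states and jump rates\<close>

lemma ranked_state_zero: "ranked_state K x \<Longrightarrow> x 0 = 0"
  unfolding ranked_state_def by auto

lemma ranked_state_mono:
  assumes "ranked_state K x" and "1 \<le> i" and "i \<le> j" and "j \<le> K"
  shows "x i \<le> x j"
  using assms(3,4)
proof (induction j rule: dec_induct)
  case (step j)
  then have "x j \<le> x (Suc j)"
    using assms(1,2) unfolding ranked_state_def by auto
  with step show ?case by simp
qed simp

lemma sum_class_representatives:
  fixes G :: "nat \<Rightarrow> 'b::comm_monoid_add"
  assumes "\<And>j. j \<in> {1..K} \<Longrightarrow> \<exists>!i. i \<in> {1..K} \<and> P i \<and> x i = x j"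
  shows "(\<Sum>i=1..K. if P i then (\<Sum>j\<in>{j\<in>{1..K}. x j = x i}. G j) else 0) = (\<Sum>j=1..K. G j)"
proof -
  have "(if P i then (\<Sum>j\<in>{j\<in>{1..K}. x j = x i}. G j) else 0)
      = (\<Sum>j=1..K. if P i \<and> x j = x i then G j else 0)" for i
    by (cases "P i") (simp_all add: sum.inter_filter[symmetric])
  then have "(\<Sum>i=1..K. if P i then (\<Sum>j\<in>{j\<in>{1..K}. x j = x i}. G j) else 0)
      = (\<Sum>i=1..K. \<Sum>j=1..K. if P i \<and> x j = x i then G j else 0)"
    by simp
  also have "\<dots> = (\<Sum>j=1..K. \<Sum>i=1..K. if P i \<and> x j = x i then G j else 0)"
    by (rule sum.swap)
  also have "\<dots> = (\<Sum>j=1..K. G j)"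
  proof (rule sum.cong[OF refl])
    fix j assume "j \<in> {1..K}"
    then obtain i0 where "i0 \<in> {1..K}" and
      rep: "\<And>i. i \<in> {1..K} \<Longrightarrow> P i \<and> x j = x i \<longleftrightarrow> i = i0"
      using assms by metis
    then have "(\<Sum>i=1..K. if P i \<and> x j = x i then G j else 0) = (\<Sum>i=1..K. if i = i0 then G j else 0)"
      by (intro sum.cong refl) (simp add: rep)
    also have "\<dots> = G j"
      using \<open>i0 \<in> {1..K}\<close> by simp
    finally show "(\<Sum>i=1..K. if P i \<and> x j = x i then G j else 0) = G j" .
  qed
  finally show ?thesis .
qed

text \<open>The rates \<^const>\<open>up_rate\<close> and \<^const>\<open>down_rate\<close> vanish except at the top, respectively
  the bottom, index of each block of equal components of a ranked state.\<close>

definition class_top :: "nat \<Rightarrow> (nat \<Rightarrow> nat) \<Rightarrow> nat \<Rightarrow> bool" where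
  "class_top K x i \<longleftrightarrow> i = K \<or> x i < x (Suc i)"

definition class_bottom :: "(nat \<Rightarrow> nat) \<Rightarrow> nat \<Rightarrow> bool" where
  "class_bottom x i \<longleftrightarrow> i = 1 \<or> x (i - 1) < x i"

lemma class_top_unique:
  assumes r: "ranked_state K x" and j: "j \<in> {1..K}"
  shows "\<exists>!i. i \<in> {1..K} \<and> class_top K x i \<and> x i = x j"
proof (rule ex_ex1I)
  let ?I = "{i\<in>{1..K}. x i = x j}"
  define i0 where "i0 = Max ?I"
  have fin: "finite ?I" and ne: "?I \<noteq> {}"
    using j by auto
  have i0: "i0 \<in> ?I"
    unfolding i0_def using fin ne by (rule Max_in)
  have i0_max: "\<And>i. i \<in> ?I \<Longrightarrow> i \<le> i0"
    unfolding i0_def using fin by (rule Max_ge)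
  have "class_top K x i0"
  proof (cases "i0 = K")
    case False
    then have "x i0 \<le> x (Suc i0)" and "Suc i0 \<notin> ?I"
      using i0 i0_max[of "Suc i0"] ranked_state_mono[OF r, of i0 "Suc i0"] by auto
    then show ?thesis
      using i0 False by (auto simp: class_top_def)
  qed (simp add: class_top_def)
  then show "\<exists>i. i \<in> {1..K} \<and> class_top K x i \<and> x i = x j"
    using i0 by blast
next
  have less: "x i < x i'" if "i < i'" "i' \<le> K" "1 \<le> i" "class_top K x i" for i i'
    using that ranked_state_mono[OF r, of "Suc i" i'] by (auto simp: class_top_def)
  fix i i'
  assume "i \<in> {1..K} \<and> class_top K x i \<and> x i = x j" "i' \<in> {1..K} \<and> class_top K x i' \<and> x i' = x j"
  then show "i = i'"
    using less[of i i'] less[of i' i] by (cases i i' rule: linorder_cases) auto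
qed

lemma class_bottom_unique:
  assumes r: "ranked_state K x" and j: "j \<in> {1..K}"
  shows "\<exists>!i. i \<in> {1..K} \<and> class_bottom x i \<and> x i = x j"
proof (rule ex_ex1I)
  let ?I = "{i\<in>{1..K}. x i = x j}"
  define i0 where "i0 = Min ?I"
  have fin: "finite ?I" and ne: "?I \<noteq> {}"
    using j by auto
  have i0: "i0 \<in> ?I"
    unfolding i0_def using fin ne by (rule Min_in)
  have i0_min: "\<And>i. i \<in> ?I \<Longrightarrow> i0 \<le> i"
    unfolding i0_def using fin by (rule Min_le)
  have "class_bottom x i0"
  proof (cases "i0 = 1")
    case False
    then have "x (i0 - 1) \<le> x i0" and "i0 - 1 \<notin> ?I"
      using i0 i0_min[of "i0 - 1"] ranked_state_mono[OF r, of "i0 - 1" i0] by auto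
    then show ?thesis
      using i0 False by (auto simp: class_bottom_def)
  qed (simp add: class_bottom_def)
  then show "\<exists>i. i \<in> {1..K} \<and> class_bottom x i \<and> x i = x j"
    using i0 by blast
next
  have less: "x i < x i'" if "i < i'" "i' \<le> K" "1 \<le> i" "class_bottom x i'" for i i'
    using that ranked_state_mono[OF r, of i "i' - 1"] by (fastforce simp: class_bottom_def)
  fix i i'
  assume "i \<in> {1..K} \<and> class_bottom x i \<and> x i = x j" "i' \<in> {1..K} \<and> class_bottom x i' \<and> x i' = x j"
  then show "i = i'"
    using less[of i i'] less[of i' i] by (cases i i' rule: linorder_cases) auto
qed

lemma sum_up_rate_mult:
  assumes r: "ranked_state K x"
  shows "(\<Sum>i=1..K. up_rate K a n x i * F (x i)) = real n * (\<Sum>j=1..K. (1 - a j / sqrt (real n)) * F (x j))"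
proof -
  have "(\<Sum>i=1..K. up_rate K a n x i * F (x i))
     = (\<Sum>i=1..K. if class_top K x i
          then (\<Sum>j\<in>{j\<in>{1..K}. x j = x i}. real n * ((1 - a j / sqrt (real n)) * F (x j))) else 0)"
  proof (rule sum.cong[OF refl])
    fix i
    have "alpha_rate K a n x i * F (x i) = (\<Sum>j\<in>{j\<in>{1..K}. x j = x i}. (1 - a j / sqrt (real n)) * F (x j))"
      unfolding alpha_rate_def sum_distrib_right by (rule sum.cong) auto
    then show "up_rate K a n x i * F (x i) = (if class_top K x i
          then (\<Sum>j\<in>{j\<in>{1..K}. x j = x i}. real n * ((1 - a j / sqrt (real n)) * F (x j))) else 0)"
      unfolding up_rate_def class_top_def by (simp add: sum_distrib_left[symmetric] mult.assoc)
  qed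
  also have "\<dots> = (\<Sum>j=1..K. real n * ((1 - a j / sqrt (real n)) * F (x j)))"
    using class_top_unique[OF r] by (rule sum_class_representatives)
  finally show ?thesis by (simp add: sum_distrib_left)
qed

lemma sum_down_rate_mult:
  assumes r: "ranked_state K x"
  shows "(\<Sum>i=1..K. down_rate K n x i * F (x i)) = real n * (\<Sum>j=1..K. if 0 < x j then F (x j) else 0)"
proof -
  have "(\<Sum>i=1..K. down_rate K n x i * F (x i))
     = (\<Sum>i=1..K. if class_bottom x i
          then (\<Sum>j\<in>{j\<in>{1..K}. x j = x i}. real n * (if 0 < x j then F (x j) else 0)) else 0)"
  proof (rule sum.cong[OF refl])
    fix i
    have "(\<Sum>j\<in>{j\<in>{1..K}. x j = x i}. real n * (if 0 < x j then F (x j) else 0))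
        = real (card {j\<in>{1..K}. x j = x i}) * (real n * (if 0 < x i then F (x i) else 0))"
      by simp
    moreover have "(if i = 1 then 0 else x (i - 1)) < x i \<longleftrightarrow> class_bottom x i \<and> 0 < x i"
      unfolding class_bottom_def by auto
    ultimately show "down_rate K n x i * F (x i) = (if class_bottom x i
          then (\<Sum>j\<in>{j\<in>{1..K}. x j = x i}. real n * (if 0 < x j then F (x j) else 0)) else 0)"
      unfolding down_rate_def delta_rate_def by auto
  qed
  also have "\<dots> = (\<Sum>j=1..K. real n * (if 0 < x j then F (x j) else 0))"
    using class_bottom_unique[OF r] by (rule sum_class_representatives)
  finally show ?thesis by (simp add: sum_distrib_left)
qed

lemma admissible_sqrt_ge_1: "admissible K a n \<Longrightarrow> 1 \<le> sqrt (real n)"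
  unfolding admissible_def by simp

lemma admissible_less_sqrt:
  assumes "admissible K a n" and "j \<in> {1..K}"
  shows "a j < sqrt (real n)"
proof -
  have "(max (a j) 0)\<^sup>2 < real n"
    using assms unfolding admissible_def by auto
  then have "max (a j) 0 < sqrt (real n)"
    by (rule real_less_rsqrt)
  then show ?thesis by simp
qed

lemma up_rate_nonneg:
  assumes adm: "admissible K a n"
  shows "0 \<le> up_rate K a n x i"
proof -
  have "0 \<le> 1 - a j / sqrt (real n)" if "j \<in> {1..K}" for j
    using admissible_less_sqrt[OF adm that] admissible_sqrt_ge_1[OF adm] by (simp add: field_simps)
  then have "0 \<le> alpha_rate K a n x i"
    unfolding alpha_rate_def by (intro sum_nonneg) auto
  then show ?thesis
    unfolding up_rate_def by simp
qed

lemma down_rate_nonneg: "0 \<le> down_rate K n x i"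
  unfolding down_rate_def delta_rate_def by simp

definition total_rate :: "nat \<Rightarrow> (nat \<Rightarrow> real) \<Rightarrow> nat \<Rightarrow> (nat \<Rightarrow> nat) \<Rightarrow> real" where
  "total_rate K a n x = (\<Sum>i=1..K. up_rate K a n x i + down_rate K n x i)"

lemma total_rate_le_unif_rate:
  assumes adm: "admissible K a n" and r: "ranked_state K x"
  shows "total_rate K a n x \<le> unif_rate K a n"
proof -
  have "total_rate K a n x
      = real n * (\<Sum>j=1..K. 1 - a j / sqrt (real n)) + real n * (\<Sum>j=1..K. if 0 < x j then 1 else 0)"
    unfolding total_rate_def sum.distrib
    using sum_up_rate_mult[OF r, of a n "\<lambda>_. 1"] sum_down_rate_mult[OF r, of n "\<lambda>_. 1"] by simp
  also have "\<dots> \<le> real n * (\<Sum>j=1..K. 1 + \<bar>a j\<bar>) + real n * (\<Sum>j=1..K. 1)"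
  proof (intro add_mono mult_left_mono sum_mono)
    fix j
    have "- a j / sqrt (real n) \<le> \<bar>a j\<bar> / sqrt (real n)"
      by (rule divide_right_mono) auto
    also have "\<dots> \<le> \<bar>a j\<bar>"
      using admissible_sqrt_ge_1[OF adm] by (simp add: divide_le_eq mult_le_cancel_left1)
    finally show "1 - a j / sqrt (real n) \<le> 1 + \<bar>a j\<bar>" by simp
  qed auto
  also have "\<dots> = unif_rate K a n"
    unfolding unif_rate_def by (simp add: sum.distrib algebra_simps)
  finally show ?thesis .
qed

lemma admissible_unif_rate_pos: "admissible K a n \<Longrightarrow> 1 \<le> K \<Longrightarrow> 0 < unif_rate K a n"
  unfolding unif_rate_def admissible_def by (simp add: add_pos_nonneg sum_nonneg)

lemma ranked_state_up:
  assumes r: "ranked_state K x" and i: "i \<in> {1..K}" and "up_rate K a n x i \<noteq> 0"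
  shows "ranked_state K (x(i := Suc (x i)))"
proof -
  have "i = K \<or> x i < x (Suc i)"
    using assms(3) unfolding up_rate_def by (auto split: if_splits)
  then show ?thesis
    using r i unfolding ranked_state_def by (auto simp: Suc_le_eq)
qed

lemma ranked_state_down:
  assumes r: "ranked_state K x" and i: "i \<in> {1..K}" and "down_rate K n x i \<noteq> 0"
  shows "ranked_state K (x(i := x i - 1))"
proof -
  have "(if i = 1 then 0 else x (i - 1)) < x i"
    using assms(3) unfolding down_rate_def by (auto split: if_splits)
  then show ?thesis
    using r i unfolding ranked_state_def by (auto simp: le_diff_conv2)
qed

section \<open>Positivity of the jump operator\<close>

lemma generator_affine: "generator K a n (\<lambda>y. c * h y + e) x = c * generator K a n h x"
  unfolding generator_def sum_distrib_left by (rule sum.cong) (auto simp: algebra_simps)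

lemma jump_op_affine: "jump_op K a n (\<lambda>y. c * h y + e) x = c * jump_op K a n h x + e"
  unfolding jump_op_def generator_affine by (simp add: algebra_simps)

lemma generator_diff: "generator K a n (\<lambda>y. h y - h' y) x = generator K a n h x - generator K a n h' x"
  unfolding generator_def sum_subtractf[symmetric] by (rule sum.cong) (auto simp: algebra_simps)

lemma generator_le_of_increments:
  assumes adm: "admissible K a n"
    and up: "\<And>i. i \<in> {1..K} \<Longrightarrow> up_rate K a n x i \<noteq> 0 \<Longrightarrow>
               f (x(i := Suc (x i))) - f x \<le> c * (g (x(i := Suc (x i))) - g x) + d"
    and down: "\<And>i. i \<in> {1..K} \<Longrightarrow> down_rate K n x i \<noteq> 0 \<Longrightarrow>
               f (x(i := x i - 1)) - f x \<le> c * (g (x(i := x i - 1)) - g x) + d"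
  shows "generator K a n f x \<le> c * generator K a n g x + d * total_rate K a n x"
proof -
  have "generator K a n f x \<le> (\<Sum>i=1..K. up_rate K a n x i * (c * (g (x(i := Suc (x i))) - g x) + d)
      + down_rate K n x i * (c * (g (x(i := x i - 1)) - g x) + d))"
    unfolding generator_def
  proof (intro sum_mono add_mono)
    fix i assume i: "i \<in> {1..K}"
    show "up_rate K a n x i * (f (x(i := Suc (x i))) - f x)
        \<le> up_rate K a n x i * (c * (g (x(i := Suc (x i))) - g x) + d)"
      using up[OF i] up_rate_nonneg[OF adm] by (cases "up_rate K a n x i = 0") (auto intro: mult_left_mono)
    show "down_rate K n x i * (f (x(i := x i - 1)) - f x)
        \<le> down_rate K n x i * (c * (g (x(i := x i - 1)) - g x) + d)"
      using down[OF i] down_rate_nonneg by (cases "down_rate K n x i = 0") (auto intro: mult_left_mono)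
  qed
  also have "\<dots> = c * generator K a n g x + d * total_rate K a n x"
    unfolding generator_def total_rate_def sum_distrib_left sum.distrib[symmetric]
    by (rule sum.cong) (auto simp: algebra_simps)
  finally show ?thesis .
qed

text \<open>Since the chain stays in ranked states and \<^const>\<open>unif_rate\<close> dominates the total jump rate,
  \<open>J = I + Q / \<Lambda>\<close> is a Markov kernel there, hence monotone.\<close>

lemma jump_op_mono:
  assumes adm: "admissible K a n" and K: "1 \<le> K" and r: "ranked_state K x"
    and le: "\<And>y. ranked_state K y \<Longrightarrow> h y \<le> h' y"
  shows "jump_op K a n h x \<le> jump_op K a n h' x"
proof -
  define \<delta> where "\<delta> = (\<lambda>y. h' y - h y)"
  have \<Lambda>: "0 < unif_rate K a n"
    using adm K by (rule admissible_unif_rate_pos)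
  have "generator K a n (\<lambda>_. 0) x \<le> 1 * generator K a n \<delta> x + \<delta> x * total_rate K a n x"
  proof (rule generator_le_of_increments[OF adm])
    show "0 - 0 \<le> 1 * (\<delta> (x(i := Suc (x i))) - \<delta> x) + \<delta> x" if "i \<in> {1..K}" "up_rate K a n x i \<noteq> 0" for i
      using le[OF ranked_state_up[OF r that]] by (simp add: \<delta>_def)
    show "0 - 0 \<le> 1 * (\<delta> (x(i := x i - 1)) - \<delta> x) + \<delta> x" if "i \<in> {1..K}" "down_rate K n x i \<noteq> 0" for i
      using le[OF ranked_state_down[OF r that]] by (simp add: \<delta>_def)
  qed
  then have "- \<delta> x * total_rate K a n x \<le> generator K a n \<delta> x"
    by (simp add: generator_def)
  moreover have "\<delta> x * total_rate K a n x \<le> \<delta> x * unif_rate K a n"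
    using le[OF r] total_rate_le_unif_rate[OF adm r] by (intro mult_left_mono) (auto simp: \<delta>_def)
  ultimately have "- \<delta> x \<le> generator K a n \<delta> x / unif_rate K a n"
    using \<Lambda> by (simp add: field_simps)
  then show ?thesis
    using \<Lambda> unfolding jump_op_def \<delta>_def generator_diff by (simp add: diff_divide_distrib)
qed

lemma jump_op_iter_nonneg:
  assumes adm: "admissible K a n" and K: "1 \<le> K"
    and nonneg: "\<And>y. ranked_state K y \<Longrightarrow> 0 \<le> h y"
  shows "ranked_state K x \<Longrightarrow> 0 \<le> (jump_op K a n ^^ k) h x"
proof (induction k arbitrary: x)
  case (Suc k)
  have "0 = jump_op K a n (\<lambda>_. 0) x"
    by (simp add: jump_op_def generator_def)
  also have "\<dots> \<le> jump_op K a n ((jump_op K a n ^^ k) h) x"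
    using adm K Suc.prems Suc.IH by (rule jump_op_mono)
  finally show ?case by simp
qed (simp add: nonneg)

lemma jump_op_iter_le:
  assumes adm: "admissible K a n" and K: "1 \<le> K"
    and step: "\<And>k y. ranked_state K y \<Longrightarrow> jump_op K a n (\<psi> k) y \<le> \<psi> (Suc k) y"
    and base: "\<And>y. ranked_state K y \<Longrightarrow> h y \<le> \<psi> 0 y"
  shows "ranked_state K x \<Longrightarrow> (jump_op K a n ^^ k) h x \<le> \<psi> k x"
proof (induction k arbitrary: x)
  case (Suc k)
  have "(jump_op K a n ^^ Suc k) h x \<le> jump_op K a n (\<psi> k) x"
    using jump_op_mono[OF adm K Suc.prems Suc.IH] by simp
  also have "\<dots> \<le> \<psi> (Suc k) x"
    using Suc.prems by (rule step)
  finally show ?case .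
qed (simp add: base)

section \<open>Drift of the sum of squares\<close>

definition sum_sq :: "nat \<Rightarrow> (nat \<Rightarrow> nat) \<Rightarrow> real" where
  "sum_sq K x = (\<Sum>i=1..K. (real (x i))\<^sup>2)"

lemma sum_sq_nonneg: "0 \<le> sum_sq K x"
  unfolding sum_sq_def by (rule sum_nonneg) simp

lemma component_sq_le_sum_sq: "i \<in> {1..K} \<Longrightarrow> (real (x i))\<^sup>2 \<le> sum_sq K x"
  unfolding sum_sq_def by (rule member_le_sum) auto

lemma sum_sq_upd:
  assumes i: "i \<in> {1..K}"
  shows "sum_sq K (x(i := v)) = sum_sq K x - (real (x i))\<^sup>2 + (real v)\<^sup>2"
proof -
  have "sum_sq K (x(i := v)) - (real v)\<^sup>2 = (\<Sum>j\<in>{1..K} - {i}. (real (x j))\<^sup>2)"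
    unfolding sum_sq_def sum.remove[OF finite_atLeastAtMost i] by (auto intro!: sum.cong)
  moreover have "sum_sq K x - (real (x i))\<^sup>2 = (\<Sum>j\<in>{1..K} - {i}. (real (x j))\<^sup>2)"
    unfolding sum_sq_def sum.remove[OF finite_atLeastAtMost i] by simp
  ultimately show ?thesis by simp
qed

lemma generator_sum_sq:
  assumes r: "ranked_state K x"
  shows "generator K a n (sum_sq K) x = real n * (\<Sum>j=1..K. (1 - a j / sqrt (real n)) * (2 * real (x j) + 1))
          + real n * (\<Sum>j=1..K. if 0 < x j then 1 - 2 * real (x j) else 0)"
proof -
  have "generator K a n (sum_sq K) x = (\<Sum>i=1..K. up_rate K a n x i * (2 * real (x i) + 1))
      + (\<Sum>i=1..K. down_rate K n x i * (1 - 2 * real (x i)))"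
    unfolding generator_def sum.distrib[symmetric]
  proof (rule sum.cong[OF refl])
    fix i assume i: "i \<in> {1..K}"
    have "down_rate K n x i * (sum_sq K (x(i := x i - 1)) - sum_sq K x) = down_rate K n x i * (1 - 2 * real (x i))"
    proof (cases "0 < x i")
      case True
      then show ?thesis
        unfolding sum_sq_upd[OF i] by (simp add: of_nat_diff power2_eq_square algebra_simps)
    qed (simp add: down_rate_def)
    then show "up_rate K a n x i * (sum_sq K (x(i := Suc (x i))) - sum_sq K x)
        + down_rate K n x i * (sum_sq K (x(i := x i - 1)) - sum_sq K x)
        = up_rate K a n x i * (2 * real (x i) + 1) + down_rate K n x i * (1 - 2 * real (x i))"
      unfolding sum_sq_upd[OF i] by (simp add: power2_eq_square algebra_simps)
  qed
  then show ?thesis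
    using sum_up_rate_mult[OF r, of a n "\<lambda>v. 2 * real v + 1"]
      sum_down_rate_mult[OF r, of n "\<lambda>v. 1 - 2 * real v"] by simp
qed

lemma generator_sum_sq_le:
  assumes adm: "admissible K a n" and r: "ranked_state K x"
  shows "generator K a n (sum_sq K) x \<le> - 2 * sqrt (real n) * (\<Sum>j=1..K. a j * real (x j)) + unif_rate K a n"
proof -
  define s where "s = sqrt (real n)"
  have s: "1 \<le> s" "real n = s * s"
    unfolding s_def using admissible_sqrt_ge_1[OF adm] by auto
  have "real n * ((1 - a j / s) * (2 * real (x j) + 1)) + real n * (if 0 < x j then 1 - 2 * real (x j) else 0)
      \<le> 2 * real n + real n * \<bar>a j\<bar> - 2 * s * (a j * real (x j))" for j
  proof -
    have "real n * ((1 - a j / s) * (2 * real (x j) + 1))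
        = s * s * (2 * real (x j) + 1) - s * a j * (2 * real (x j) + 1)"
      unfolding s(2) using s(1) by (simp add: field_simps)
    moreover have "real n * (if 0 < x j then 1 - 2 * real (x j) else 0) \<le> s * s * (1 - 2 * real (x j))"
      unfolding s(2) by auto
    moreover have "- s * a j \<le> s * s * \<bar>a j\<bar>"
      using s(1) by (smt (verit, ccfv_threshold) minus_mult_commute mult_le_cancel_left1 mult_right_mono)
    ultimately show ?thesis
      unfolding s(2) by (simp add: algebra_simps)
  qed
  then have "generator K a n (sum_sq K) x \<le> (\<Sum>j=1..K. 2 * real n + real n * \<bar>a j\<bar> - 2 * s * (a j * real (x j)))"
    unfolding generator_sum_sq[OF r] sum_distrib_left sum.distrib[symmetric] s_def[symmetric]
    by (intro sum_mono)
  also have "\<dots> = unif_rate K a n - 2 * s * (\<Sum>j=1..K. a j * real (x j))"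
    unfolding unif_rate_def by (simp add: sum_subtractf sum.distrib sum_distrib_left algebra_simps)
  finally show ?thesis
    unfolding s_def by simp
qed

definition gap :: "(nat \<Rightarrow> nat) \<Rightarrow> nat \<Rightarrow> real" where
  "gap x i = real (x i) - (if i = 1 then 0 else real (x (i - 1)))"

lemma zhat_normsq_eq_gaps: "zhat_normsq K n x = (\<Sum>i=1..K. (gap x i)\<^sup>2) / real n"
  unfolding zhat_normsq_def gap_def ..

lemma sum_gap: "x 0 = 0 \<Longrightarrow> (\<Sum>i=1..m. gap x i) = real (x m)"
  by (induction m) (auto simp: gap_def)

lemma gap_nonneg: "ranked_state K x \<Longrightarrow> i \<in> {1..K} \<Longrightarrow> 0 \<le> gap x i"
  unfolding gap_def using ranked_state_mono[of K x "i - 1" i] by auto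

lemma gap_le: "i \<in> {1..K} \<Longrightarrow> gap x i \<le> real (x i)"
  unfolding gap_def by auto

lemma sum_weighted_eq_tail_sums_gaps:
  "x 0 = 0 \<Longrightarrow> (\<Sum>j=1..m. a j * real (x j)) = (\<Sum>i=1..m. (\<Sum>j=i..m. a j) * gap x i)"
proof (induction m)
  case (Suc m)
  have "(\<Sum>i=1..Suc m. (\<Sum>j=i..Suc m. a j) * gap x i)
      = (\<Sum>i=1..m. (\<Sum>j=i..m. a j) * gap x i) + a (Suc m) * (\<Sum>i=1..Suc m. gap x i)"
    by (simp add: sum_distrib_left sum.distrib algebra_simps)
  also have "\<dots> = (\<Sum>j=1..Suc m. a j * real (x j))"
    using Suc sum_gap[of x "Suc m"] by simp
  finally show ?case ..
qed simp

lemma weighted_sum_ge_min_tail_sum: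
  assumes r: "ranked_state K x" and tail: "\<And>i. i \<in> {1..K} \<Longrightarrow> \<alpha> \<le> (\<Sum>j=i..K. a j)"
  shows "\<alpha> * real (x K) \<le> (\<Sum>j=1..K. a j * real (x j))"
proof -
  have "\<alpha> * real (x K) = (\<Sum>i=1..K. \<alpha> * gap x i)"
    using sum_gap[of x K, OF ranked_state_zero[OF r]] by (simp add: sum_distrib_left[symmetric])
  also have "\<dots> \<le> (\<Sum>i=1..K. (\<Sum>j=i..K. a j) * gap x i)"
    using tail gap_nonneg[OF r] by (intro sum_mono mult_right_mono)
  also have "\<dots> = (\<Sum>j=1..K. a j * real (x j))"
    using sum_weighted_eq_tail_sums_gaps[of x, OF ranked_state_zero[OF r]] by simp
  finally show ?thesis .
qed

lemma sum_sq_le_top: "ranked_state K x \<Longrightarrow> sum_sq K x \<le> real K * (real (x K))\<^sup>2"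
  using sum_mono[of "{1..K}" "\<lambda>i. (real (x i))\<^sup>2" "\<lambda>_. (real (x K))\<^sup>2"] ranked_state_mono[of K x _ K]
  unfolding sum_sq_def by (simp add: power_mono)

lemma sum_gap_sq_le_sum_sq: "ranked_state K x \<Longrightarrow> (\<Sum>i=1..K. (gap x i)\<^sup>2) \<le> sum_sq K x"
  unfolding sum_sq_def using gap_nonneg gap_le by (intro sum_mono power_mono) auto

lemma sum_sq_le_sum_gap_sq:
  assumes r: "ranked_state K x"
  shows "sum_sq K x \<le> (real K) ^ 3 * (\<Sum>i=1..K. (gap x i)\<^sup>2)"
proof -
  define S where "S = (\<Sum>i=1..K. (gap x i)\<^sup>2)"
  have "gap x i \<le> sqrt S" if "i \<in> {1..K}" for i
    using member_le_sum[of i "{1..K}" "\<lambda>i. (gap x i)\<^sup>2"] that unfolding S_def by (simp add: real_le_rsqrt)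
  then have "real (x K) \<le> real K * sqrt S"
    using sum_mono[of "{1..K}" "gap x" "\<lambda>_. sqrt S"] sum_gap[of x K, OF ranked_state_zero[OF r]] by simp
  then have "(real (x K))\<^sup>2 \<le> (real K)\<^sup>2 * S"
    using power_mono[of "real (x K)" "real K * sqrt S" 2] unfolding S_def
    by (simp add: power_mult_distrib sum_nonneg)
  then have "real K * (real (x K))\<^sup>2 \<le> real K * ((real K)\<^sup>2 * S)"
    by (rule mult_left_mono) simp
  then show ?thesis
    using sum_sq_le_top[OF r] unfolding S_def by (simp add: power2_eq_square power3_eq_cube)
qed

lemma zhat_normsq_nonneg: "0 \<le> zhat_normsq K n y"
  unfolding zhat_normsq_eq_gaps by (simp add: sum_nonneg)

lemma zhat_normsq_le_sum_sq: "ranked_state K y \<Longrightarrow> zhat_normsq K n y \<le> sum_sq K y / real n"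
  unfolding zhat_normsq_eq_gaps by (intro divide_right_mono sum_gap_sq_le_sum_sq) auto

lemma sum_sq_le_zhat_normsq:
  assumes "ranked_state K y"
  shows "sum_sq K y / real n \<le> real K ^ 3 * zhat_normsq K n y"
proof -
  have "sum_sq K y / real n \<le> real K ^ 3 * (\<Sum>i=1..K. (gap y i)\<^sup>2) / real n"
    using sum_sq_le_sum_gap_sq[OF assms] by (rule divide_right_mono) simp
  then show ?thesis
    unfolding zhat_normsq_eq_gaps by simp
qed

section \<open>A Lyapunov function\<close>

lemma abs_sqrt_add_diff_le_1:
  fixes G d :: real
  assumes "0 \<le> G" and "0 \<le> G + d" and "\<bar>d - 1\<bar> \<le> 2 * sqrt G"
  shows "\<bar>sqrt (G + d) - sqrt G\<bar> \<le> 1"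
proof -
  have sq: "(sqrt G) ^ 2 = G"
    using assms(1) by simp
  have "G + d \<le> (sqrt G + 1)\<^sup>2"
    using assms(3) sq by (simp add: power2_eq_square algebra_simps)
  then have "sqrt (G + d) \<le> sqrt G + 1"
    using real_sqrt_le_mono[of "G + d" "(sqrt G + 1)\<^sup>2"] assms(1) by simp
  moreover have "sqrt G - 1 \<le> sqrt (G + d)"
  proof (cases "sqrt G \<le> 1")
    case False
    then have "(sqrt G - 1)\<^sup>2 \<le> G + d"
      using assms(3) sq by (simp add: power2_eq_square algebra_simps)
    then show ?thesis
      using real_sqrt_le_mono[of "(sqrt G - 1)\<^sup>2" "G + d"] False by simp
  qed (use real_sqrt_ge_zero[OF assms(2)] in linarith)
  ultimately show ?thesis by linarith
qed

lemma sqrt_le_tangent: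
  fixes G G' :: real
  assumes "0 < G" and "0 \<le> G'"
  shows "sqrt G' \<le> sqrt G + (G' - G) / (2 * sqrt G)"
proof -
  define s s' where "s = sqrt G" and "s' = sqrt G'"
  have "G = s * s" "G' = s' * s'" "0 < s"
    unfolding s_def s'_def using assms by simp_all
  moreover have "0 \<le> (s' - s)\<^sup>2" by simp
  ultimately have "(s' - s) * (2 * s) \<le> G' - G"
    by (simp add: power2_eq_square algebra_simps)
  then show ?thesis
    using \<open>0 < s\<close> unfolding s_def s'_def by (simp add: field_simps)
qed

lemma pos_part_sq_diff_le:
  fixes q p :: real
  assumes "\<bar>q - p\<bar> \<le> 1"
  shows "(max q 0)\<^sup>2 - (max p 0)\<^sup>2 \<le> 2 * max p 0 * (q - p) + 1"
proof (cases "0 \<le> p"; cases "0 \<le> q")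
  assume "0 \<le> p" "0 \<le> q"
  moreover have "(q - p)\<^sup>2 \<le> 1"
    using assms by (simp add: abs_square_le_1)
  ultimately show ?thesis by (simp add: max_def power2_eq_square algebra_simps)
next
  assume "0 \<le> p" "\<not> 0 \<le> q"
  moreover have "2 * p * (p - 1) \<le> 2 * p * q"
    using assms \<open>0 \<le> p\<close> by (intro mult_left_mono) auto
  moreover have "0 \<le> (p - 1)\<^sup>2" by simp
  ultimately show ?thesis by (simp add: max_def power2_eq_square algebra_simps)
next
  assume "\<not> 0 \<le> p" "0 \<le> q"
  moreover have "q * q \<le> 1 * 1"
    using assms calculation by (intro mult_mono) auto
  ultimately show ?thesis by (simp add: max_def power2_eq_square)
qed (simp add: max_def)

lemma pos_part_shift_sq_lower:
  fixes p \<beta> :: real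
  assumes "0 \<le> p"
  shows "p\<^sup>2 - 2 * p * \<beta> \<le> (max (p - \<beta>) 0)\<^sup>2"
proof (cases "\<beta> \<le> p")
  case False
  then have "p * p \<le> \<beta> * p" and "0 \<le> \<beta> * p"
    using assms by (auto intro: mult_right_mono)
  then show ?thesis
    using False by (simp add: power2_eq_square mult.commute)
qed (simp add: max_def power2_eq_square algebra_simps)

lemma pos_part_shift_sq_upper:
  fixes p \<beta> :: real
  assumes "0 \<le> p" and "0 \<le> \<beta>"
  shows "p\<^sup>2 \<le> (max (p - \<beta>) 0)\<^sup>2 + 2 * \<beta> * p"
proof (cases "\<beta> \<le> p")
  case False
  then have "p * p \<le> \<beta> * p" and "0 \<le> \<beta> * p"
    using assms by (auto intro: mult_right_mono)
  then show ?thesis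
    using False by (simp add: power2_eq_square)
qed (simp add: max_def power2_eq_square algebra_simps)

definition rate_const :: "nat \<Rightarrow> (nat \<Rightarrow> real) \<Rightarrow> real" where
  "rate_const K a = 2 * real K + (\<Sum>j=1..K. \<bar>a j\<bar>)"

definition min_tail_sum :: "nat \<Rightarrow> (nat \<Rightarrow> real) \<Rightarrow> real" where
  "min_tail_sum K a = Min ((\<lambda>i. \<Sum>j=i..K. a j) ` {1..K})"

text \<open>With \<open>\<alpha> = min_tail_sum K a\<close>, the shift \<open>B = lyap_shift K a\<close> is chosen so that
  \<open>sum_sq K x \<ge> B n\<close> forces \<open>unif_rate K a n \<le> sqrt n \<alpha> x\<^sub>K\<close>, half of the drift of \<open>sum_sq\<close>; there
  \<open>lyap\<close> decreases by \<open>lyap_decrement\<close> per jump of the uniformized chain.\<close>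

definition lyap_shift :: "nat \<Rightarrow> (nat \<Rightarrow> real) \<Rightarrow> real" where
  "lyap_shift K a = real K * (rate_const K a)\<^sup>2 / (min_tail_sum K a)\<^sup>2"

definition drift_const :: "nat \<Rightarrow> (nat \<Rightarrow> real) \<Rightarrow> real" where
  "drift_const K a = min_tail_sum K a / sqrt (8 * real K)"

definition step_const :: "nat \<Rightarrow> (nat \<Rightarrow> real) \<Rightarrow> real" where
  "step_const K a = 2 + 2 * drift_const K a * sqrt (2 * lyap_shift K a) / rate_const K a"

definition lyap :: "nat \<Rightarrow> (nat \<Rightarrow> real) \<Rightarrow> nat \<Rightarrow> (nat \<Rightarrow> nat) \<Rightarrow> real" where
  "lyap K a n y = sqrt (sum_sq K y + lyap_shift K a * real n)"

definition lyap_decrement :: "nat \<Rightarrow> (nat \<Rightarrow> real) \<Rightarrow> nat \<Rightarrow> real" where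
  "lyap_decrement K a n = drift_const K a * sqrt (real n) / unif_rate K a n"

lemma unif_rate_eq: "unif_rate K a n = real n * rate_const K a"
  unfolding unif_rate_def rate_const_def ..

lemma min_tail_sum_le: "i \<in> {1..K} \<Longrightarrow> min_tail_sum K a \<le> (\<Sum>j=i..K. a j)"
  unfolding min_tail_sum_def by (rule Min_le) auto

locale stable_rates =
  fixes K :: nat and a :: "nat \<Rightarrow> real"
  assumes K_pos: "1 \<le> K"
    and tail_sums_pos: "\<forall>i\<in>{1..K}. (\<Sum>j=i..K. a j) > 0"
begin

lemma rate_const_ge_2: "2 \<le> rate_const K a"
proof -
  have "0 \<le> (\<Sum>j=1..K. \<bar>a j\<bar>)"
    by (rule sum_nonneg) simp
  moreover have "1 \<le> real K"
    using K_pos by simp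
  ultimately show ?thesis
    unfolding rate_const_def by linarith
qed

lemma min_tail_sum_pos: "0 < min_tail_sum K a"
proof -
  have "min_tail_sum K a \<in> (\<lambda>i. \<Sum>j=i..K. a j) ` {1..K}"
    unfolding min_tail_sum_def using K_pos by (intro Min_in) auto
  then show ?thesis
    using tail_sums_pos by auto
qed

lemma lyap_shift_pos: "0 < lyap_shift K a"
  unfolding lyap_shift_def using K_pos rate_const_ge_2 min_tail_sum_pos by simp

lemma drift_const_pos: "0 < drift_const K a"
  unfolding drift_const_def using K_pos min_tail_sum_pos by simp

lemma step_const_ge_2: "2 \<le> step_const K a"
  unfolding step_const_def using drift_const_pos lyap_shift_pos rate_const_ge_2 by simp

lemma weighted_sum_ge_min_tail_sum_top:
  "ranked_state K x \<Longrightarrow> min_tail_sum K a * real (x K) \<le> (\<Sum>j=1..K. a j * real (x j))"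
  by (rule weighted_sum_ge_min_tail_sum) (auto simp: min_tail_sum_le)

end

locale stable_queue = stable_rates K a
  for K :: nat and a :: "nat \<Rightarrow> real" +
  fixes n :: nat
  assumes adm: "admissible K a n"
begin

lemma n_ge_1: "1 \<le> real n"
  using adm unfolding admissible_def by simp

lemma unif_rate_pos: "0 < unif_rate K a n"
  using adm K_pos by (rule admissible_unif_rate_pos)

lemma lyap_sq: "(lyap K a n y)\<^sup>2 = sum_sq K y + lyap_shift K a * real n"
  unfolding lyap_def using sum_sq_nonneg[of K y] lyap_shift_pos by simp

lemma lyap_pos: "0 < lyap K a n y"
  unfolding lyap_def using sum_sq_nonneg[of K y] lyap_shift_pos n_ge_1 by (simp add: add_nonneg_pos)

lemma lyap_decrement_nonneg: "0 \<le> lyap_decrement K a n"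
  unfolding lyap_decrement_def using drift_const_pos unif_rate_pos by simp

lemma lyap_upd_diff_le_1:
  assumes i: "i \<in> {1..K}" and v: "\<bar>real v - real (x i)\<bar> = 1"
  shows "\<bar>lyap K a n (x(i := v)) - lyap K a n x\<bar> \<le> 1"
proof -
  define G where "G = sum_sq K x + lyap_shift K a * real n"
  define u where "u = real (x i)"
  have "0 \<le> lyap_shift K a * real n"
    using lyap_shift_pos by simp
  then have "0 \<le> u" "u\<^sup>2 \<le> G"
    unfolding G_def u_def using component_sq_le_sum_sq[OF i, of x] by auto
  then have "u \<le> sqrt G"
    using real_le_rsqrt by blast
  have "real v = u + 1 \<or> real v = u - 1"
    using v unfolding u_def by linarith
  then have "\<bar>((real v)\<^sup>2 - u\<^sup>2) - 1\<bar> = 2 * u"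
    using \<open>0 \<le> u\<close> by (auto simp: power2_eq_square algebra_simps)
  moreover have "0 \<le> G + ((real v)\<^sup>2 - u\<^sup>2)"
    using \<open>u\<^sup>2 \<le> G\<close> zero_le_power2[of "real v"] by linarith
  ultimately have "\<bar>sqrt (G + ((real v)\<^sup>2 - u\<^sup>2)) - sqrt G\<bar> \<le> 1"
    using \<open>u \<le> sqrt G\<close> order_trans[OF zero_le_power2 \<open>u\<^sup>2 \<le> G\<close>] by (intro abs_sqrt_add_diff_le_1) auto
  then show ?thesis
    unfolding lyap_def sum_sq_upd[OF i] G_def u_def by (simp add: algebra_simps)
qed

lemma generator_sum_sq_le_unif_rate:
  assumes r: "ranked_state K x"
  shows "generator K a n (sum_sq K) x \<le> unif_rate K a n"
proof -
  have "0 \<le> min_tail_sum K a * real (x K)"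
    using min_tail_sum_pos by simp
  then have "0 \<le> sqrt (real n) * (\<Sum>j=1..K. a j * real (x j))"
    using weighted_sum_ge_min_tail_sum_top[OF r] by simp
  then show ?thesis
    using generator_sum_sq_le[OF adm r] by linarith
qed

lemma sum_sq_far_top:
  assumes r: "ranked_state K x" and far: "lyap_shift K a * real n \<le> sum_sq K x"
  shows "rate_const K a * sqrt (real n) \<le> min_tail_sum K a * real (x K)"
    and "2 * drift_const K a * lyap K a n x \<le> min_tail_sum K a * real (x K)"
proof -
  define m \<alpha> where "m = real (x K)" and "\<alpha> = min_tail_sum K a"
  have "0 \<le> m" "0 < \<alpha>" "0 < real K"
    unfolding m_def \<alpha>_def using min_tail_sum_pos K_pos by auto
  have top: "lyap_shift K a * real n \<le> real K * m\<^sup>2"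
    using far sum_sq_le_top[OF r] unfolding m_def by linarith
  have "\<alpha>\<^sup>2 * lyap_shift K a = real K * (rate_const K a)\<^sup>2"
    unfolding lyap_shift_def \<alpha>_def using \<open>0 < \<alpha>\<close> \<alpha>_def by simp
  then have "real K * ((rate_const K a)\<^sup>2 * real n) \<le> real K * (\<alpha>\<^sup>2 * m\<^sup>2)"
    using mult_left_mono[OF top, of "\<alpha>\<^sup>2"] by (simp add: algebra_simps)
  then have "(rate_const K a * sqrt (real n))\<^sup>2 \<le> (\<alpha> * m)\<^sup>2"
    using \<open>0 < real K\<close> by (simp add: power_mult_distrib)
  then show "rate_const K a * sqrt (real n) \<le> \<alpha> * m"
    by (rule power2_le_imp_le) (use \<open>0 \<le> m\<close> \<open>0 < \<alpha>\<close> in simp)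
  have "(lyap K a n x)\<^sup>2 \<le> 2 * real K * m\<^sup>2"
    using lyap_sq top far sum_sq_le_top[OF r] unfolding m_def by simp
  then have "4 * (drift_const K a)\<^sup>2 * (lyap K a n x)\<^sup>2 \<le> 4 * (drift_const K a)\<^sup>2 * (2 * real K * m\<^sup>2)"
    by (intro mult_left_mono) auto
  then have "(2 * drift_const K a * lyap K a n x)\<^sup>2 \<le> (\<alpha> * m)\<^sup>2"
    using \<open>0 < real K\<close> unfolding drift_const_def \<alpha>_def by (simp add: power_mult_distrib field_simps)
  then show "2 * drift_const K a * lyap K a n x \<le> \<alpha> * m"
    by (rule power2_le_imp_le) (use \<open>0 \<le> m\<close> \<open>0 < \<alpha>\<close> in simp)
qed

lemma generator_sum_sq_far:
  assumes r: "ranked_state K x" and far: "lyap_shift K a * real n \<le> sum_sq K x"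
  shows "generator K a n (sum_sq K) x / unif_rate K a n \<le> - 2 * lyap_decrement K a n * lyap K a n x"
proof -
  let ?\<alpha>m = "min_tail_sum K a * real (x K)"
  have "unif_rate K a n = sqrt (real n) * (rate_const K a * sqrt (real n))"
    unfolding unif_rate_eq by (simp add: algebra_simps)
  also have "\<dots> \<le> sqrt (real n) * ?\<alpha>m"
    using sum_sq_far_top(1)[OF r far] by (rule mult_left_mono) simp
  finally have "generator K a n (sum_sq K) x \<le> - sqrt (real n) * ?\<alpha>m"
    using generator_sum_sq_le[OF adm r] weighted_sum_ge_min_tail_sum_top[OF r]
      mult_left_mono[of ?\<alpha>m _ "sqrt (real n)"] by fastforce
  also have "\<dots> \<le> - sqrt (real n) * (2 * drift_const K a * lyap K a n x)"
    using sum_sq_far_top(2)[OF r far] by (simp add: mult_left_mono)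
  finally show ?thesis
    using unif_rate_pos unfolding lyap_decrement_def by (simp add: field_simps)
qed

lemma lyap_decrement_mult_lyap_near:
  assumes near: "sum_sq K x < lyap_shift K a * real n"
  shows "2 * lyap_decrement K a n * lyap K a n x \<le> step_const K a - 2"
proof -
  have "(lyap K a n x)\<^sup>2 \<le> 2 * lyap_shift K a * real n"
    using near lyap_sq[of x] by linarith
  also have "\<dots> = (sqrt (2 * lyap_shift K a) * sqrt (real n))\<^sup>2"
    using lyap_shift_pos by (simp add: power_mult_distrib)
  finally have "lyap K a n x \<le> sqrt (2 * lyap_shift K a) * sqrt (real n)"
    by (rule power2_le_imp_le) (use lyap_shift_pos in simp)
  then have "2 * lyap_decrement K a n * lyap K a n x
      \<le> 2 * lyap_decrement K a n * (sqrt (2 * lyap_shift K a) * sqrt (real n))"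
    using lyap_decrement_nonneg by (intro mult_left_mono) auto
  also have "\<dots> = step_const K a - 2"
  proof -
    have "sqrt (real n) * sqrt (real n) = real n"
      by simp
    then show ?thesis
      unfolding step_const_def lyap_decrement_def unif_rate_eq
      using n_ge_1 rate_const_ge_2 by (simp add: field_simps)
  qed
  finally show ?thesis .
qed

text \<open>Since \<open>lyap\<close> is concave in \<open>sum_sq\<close>, the increment of the squared excess of \<open>lyap\<close> over \<open>c\<close>
  along a jump of size at most one is controlled by the increment of \<open>sum_sq\<close>.\<close>

lemma excess_sq_increment_le:
  fixes c :: real
  assumes "\<bar>lyap K a n y - lyap K a n x\<bar> \<le> 1"
  shows "(max (lyap K a n y - c) 0)\<^sup>2 - (max (lyap K a n x - c) 0)\<^sup>2
      \<le> max (lyap K a n x - c) 0 / lyap K a n x * (sum_sq K y - sum_sq K x) + 1"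
proof -
  define V p where "V = lyap K a n" and "p = max (V x - c) 0"
  have "0 \<le> p" "0 < V x"
    unfolding p_def V_def using lyap_pos by auto
  have "V y - V x \<le> (sum_sq K y - sum_sq K x) / (2 * V x)"
    using sqrt_le_tangent[of "sum_sq K x + lyap_shift K a * real n" "sum_sq K y + lyap_shift K a * real n"]
      lyap_sq[of x] lyap_sq[of y] lyap_pos[of x] sum_sq_nonneg[of K y] lyap_shift_pos
    unfolding V_def lyap_def by simp
  then have "2 * p * (V y - V x) \<le> 2 * p * ((sum_sq K y - sum_sq K x) / (2 * V x))"
    using \<open>0 \<le> p\<close> by (intro mult_left_mono) auto
  also have "\<dots> = p / V x * (sum_sq K y - sum_sq K x)"
    using \<open>0 < V x\<close> by (simp add: field_simps)
  finally show ?thesis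
    using pos_part_sq_diff_le[of "V y - c" "V x - c"] assms unfolding p_def V_def by simp
qed

lemma jump_op_excess_sq_le:
  fixes c :: real
  assumes r: "ranked_state K x"
  defines "p \<equiv> max (lyap K a n x - c) 0"
  shows "jump_op K a n (\<lambda>y. (max (lyap K a n y - c) 0)\<^sup>2) x
      \<le> p\<^sup>2 + p / lyap K a n x * (generator K a n (sum_sq K) x / unif_rate K a n) + 1"
proof -
  define h where "h = (\<lambda>y. (max (lyap K a n y - c) 0)\<^sup>2)"
  have "generator K a n h x \<le> p / lyap K a n x * generator K a n (sum_sq K) x + 1 * total_rate K a n x"
    unfolding p_def
  proof (rule generator_le_of_increments[OF adm])
    fix i assume i: "i \<in> {1..K}"
    show "h (x(i := Suc (x i))) - h x
        \<le> max (lyap K a n x - c) 0 / lyap K a n x * (sum_sq K (x(i := Suc (x i))) - sum_sq K x) + 1"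
      unfolding h_def by (rule excess_sq_increment_le) (simp add: lyap_upd_diff_le_1[OF i])
    assume "down_rate K n x i \<noteq> 0"
    then have "1 \<le> x i"
      unfolding down_rate_def by (auto split: if_splits)
    then show "h (x(i := x i - 1)) - h x
        \<le> max (lyap K a n x - c) 0 / lyap K a n x * (sum_sq K (x(i := x i - 1)) - sum_sq K x) + 1"
      unfolding h_def by (intro excess_sq_increment_le) (simp add: lyap_upd_diff_le_1[OF i] of_nat_diff)
  qed
  then have "generator K a n h x \<le> p / lyap K a n x * generator K a n (sum_sq K) x + unif_rate K a n"
    using total_rate_le_unif_rate[OF adm r] by linarith
  then have "generator K a n h x / unif_rate K a n
      \<le> (p / lyap K a n x * generator K a n (sum_sq K) x + unif_rate K a n) / unif_rate K a n"
    using unif_rate_pos by (intro divide_right_mono) auto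
  also have "\<dots> = p / lyap K a n x * (generator K a n (sum_sq K) x / unif_rate K a n) + 1"
    using unif_rate_pos by (simp add: field_simps)
  finally show ?thesis
    unfolding jump_op_def h_def p_def by simp
qed

lemma jump_op_excess_sq_step:
  assumes r: "ranked_state K x" and "0 \<le> c"
  shows "jump_op K a n (\<lambda>y. (max (lyap K a n y - c) 0)\<^sup>2) x
      \<le> (max (lyap K a n x - (c + lyap_decrement K a n)) 0)\<^sup>2 + step_const K a"
proof -
  define V p \<beta> where "V = lyap K a n x" and "p = max (V - c) 0" and "\<beta> = lyap_decrement K a n"
  have "0 < V" "0 \<le> p" "p \<le> V" "0 \<le> \<beta>"
    using \<open>0 \<le> c\<close> lyap_pos[of x] lyap_decrement_nonneg by (auto simp: p_def V_def \<beta>_def)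
  have shift: "(max (V - (c + \<beta>)) 0)\<^sup>2 = (max (p - \<beta>) 0)\<^sup>2"
    using \<open>0 \<le> \<beta>\<close> by (auto simp: p_def max_def)
  have J: "jump_op K a n (\<lambda>y. (max (lyap K a n y - c) 0)\<^sup>2) x
      \<le> p\<^sup>2 + p / V * (generator K a n (sum_sq K) x / unif_rate K a n) + 1"
    using jump_op_excess_sq_le[OF r, of c] unfolding p_def V_def .
  show ?thesis
  proof (cases "lyap_shift K a * real n \<le> sum_sq K x")
    case True
    then have "p / V * (generator K a n (sum_sq K) x / unif_rate K a n) \<le> p / V * (- 2 * \<beta> * V)"
      using generator_sum_sq_far[OF r] \<open>0 \<le> p\<close> \<open>0 < V\<close> by (intro mult_left_mono) (auto simp: V_def \<beta>_def)
    also have "\<dots> = - 2 * p * \<beta>"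
      using \<open>0 < V\<close> by simp
    finally show ?thesis
      using J pos_part_shift_sq_lower[OF \<open>0 \<le> p\<close>, of \<beta>] step_const_ge_2 shift
      unfolding V_def \<beta>_def by linarith
  next
    case False
    have "p / V * (generator K a n (sum_sq K) x / unif_rate K a n) \<le> p / V * 1"
      using generator_sum_sq_le_unif_rate[OF r] unif_rate_pos \<open>0 \<le> p\<close> \<open>0 < V\<close>
      by (intro mult_left_mono) auto
    also have "\<dots> \<le> 1"
      using \<open>p \<le> V\<close> \<open>0 < V\<close> by simp
    finally have "jump_op K a n (\<lambda>y. (max (lyap K a n y - c) 0)\<^sup>2) x \<le> p\<^sup>2 + 2"
      using J by linarith
    moreover have "2 * \<beta> * p \<le> 2 * \<beta> * V"
      using \<open>p \<le> V\<close> \<open>0 \<le> \<beta>\<close> by (intro mult_left_mono) auto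
    ultimately show ?thesis
      using lyap_decrement_mult_lyap_near[of x] False pos_part_shift_sq_upper[OF \<open>0 \<le> p\<close> \<open>0 \<le> \<beta>\<close>] shift
      unfolding V_def \<beta>_def by linarith
  qed
qed

end

section \<open>Moment bound\<close>

definition time_threshold :: "nat \<Rightarrow> (nat \<Rightarrow> real) \<Rightarrow> real" where
  "time_threshold K a = sqrt (real K ^ 3 + lyap_shift K a) / drift_const K a"

definition moment_const :: "nat \<Rightarrow> (nat \<Rightarrow> real) \<Rightarrow> real" where
  "moment_const K a = real K ^ 3 / time_threshold K a + rate_const K a
     + ((drift_const K a)\<^sup>2 / (rate_const K a)\<^sup>2 + step_const K a) * rate_const K a"

context stable_rates
begin

lemma time_threshold_pos: "0 < time_threshold K a"
  unfolding time_threshold_def using drift_const_pos lyap_shift_pos by (simp add: add_nonneg_pos)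

lemma moment_const_pos: "0 < moment_const K a"
proof -
  have "0 \<le> real K ^ 3 / time_threshold K a"
    using time_threshold_pos by simp
  moreover have "0 \<le> ((drift_const K a)\<^sup>2 / (rate_const K a)\<^sup>2 + step_const K a) * rate_const K a"
    using rate_const_ge_2 step_const_ge_2 by simp
  ultimately show ?thesis
    unfolding moment_const_def using rate_const_ge_2 by linarith
qed

lemma threshold_le_drift_const_mult:
  assumes "time_threshold K a \<le> t"
  shows "real K ^ 3 + lyap_shift K a \<le> (drift_const K a * t)\<^sup>2"
proof -
  have "sqrt (real K ^ 3 + lyap_shift K a) \<le> drift_const K a * t"
    using assms drift_const_pos unfolding time_threshold_def by (simp add: divide_le_eq mult.commute)
  then show ?thesis
    by (rule sqrt_le_D)
qed

end

context stable_queue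
begin

lemma jump_op_iter_zhat_nonneg: "ranked_state K x \<Longrightarrow> 0 \<le> (jump_op K a n ^^ k) (zhat_normsq K n) x"
  using adm K_pos zhat_normsq_nonneg by (rule jump_op_iter_nonneg)

lemma jump_op_iter_zhat_le_sum_sq:
  assumes r: "ranked_state K x"
  shows "(jump_op K a n ^^ k) (zhat_normsq K n) x \<le> (sum_sq K x + real k) / real n"
proof (rule jump_op_iter_le[OF adm K_pos _ _ r])
  fix k y assume "ranked_state K y"
  have "jump_op K a n (\<lambda>y. (sum_sq K y + real k) / real n) y
      = jump_op K a n (\<lambda>y. 1 / real n * sum_sq K y + real k / real n) y"
    by (simp add: add_divide_distrib)
  also have "\<dots> = 1 / real n * jump_op K a n (sum_sq K) y + real k / real n"
    by (rule jump_op_affine)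
  also have "\<dots> \<le> 1 / real n * (sum_sq K y + 1) + real k / real n"
    using generator_sum_sq_le_unif_rate[OF \<open>ranked_state K y\<close>] unif_rate_pos n_ge_1
    unfolding jump_op_def by (intro add_right_mono mult_left_mono) auto
  also have "\<dots> = (sum_sq K y + real (Suc k)) / real n"
    using n_ge_1 by (simp add: field_simps)
  finally show "jump_op K a n (\<lambda>y. (sum_sq K y + real k) / real n) y \<le> (sum_sq K y + real (Suc k)) / real n" .
qed (simp add: zhat_normsq_le_sum_sq)

lemma jump_op_iter_zhat_le_lyap:
  assumes r: "ranked_state K x"
  shows "(jump_op K a n ^^ k) (zhat_normsq K n) x
      \<le> ((max (lyap K a n x - lyap_decrement K a n * real k) 0)\<^sup>2 + step_const K a * real k) / real n"
proof (rule jump_op_iter_le[OF adm K_pos _ _ r])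
  fix k y assume "ranked_state K y"
  let ?h = "\<lambda>y. (max (lyap K a n y - lyap_decrement K a n * real k) 0)\<^sup>2"
  have "jump_op K a n (\<lambda>y. (?h y + step_const K a * real k) / real n) y
      = jump_op K a n (\<lambda>y. 1 / real n * ?h y + step_const K a * real k / real n) y"
    by (simp add: add_divide_distrib)
  also have "\<dots> = 1 / real n * jump_op K a n ?h y + step_const K a * real k / real n"
    by (rule jump_op_affine)
  also have "\<dots> \<le> 1 / real n * ((max (lyap K a n y - (lyap_decrement K a n * real k + lyap_decrement K a n)) 0)\<^sup>2
      + step_const K a) + step_const K a * real k / real n"
    using jump_op_excess_sq_step[OF \<open>ranked_state K y\<close>] lyap_decrement_nonneg n_ge_1
    by (intro add_right_mono mult_left_mono) auto
  also have "\<dots> = ((max (lyap K a n y - lyap_decrement K a n * real (Suc k)) 0)\<^sup>2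
      + step_const K a * real (Suc k)) / real n"
    using n_ge_1 by (simp add: field_simps)
  finally show "jump_op K a n (\<lambda>y. (?h y + step_const K a * real k) / real n) y
      \<le> ((max (lyap K a n y - lyap_decrement K a n * real (Suc k)) 0)\<^sup>2 + step_const K a * real (Suc k)) / real n" .
next
  fix y assume "ranked_state K y"
  then have "zhat_normsq K n y \<le> sum_sq K y / real n"
    by (rule zhat_normsq_le_sum_sq)
  also have "\<dots> \<le> (lyap K a n y)\<^sup>2 / real n"
    using lyap_sq[of y] lyap_shift_pos n_ge_1 by (intro divide_right_mono) auto
  finally show "zhat_normsq K n y
      \<le> ((max (lyap K a n y - lyap_decrement K a n * real 0) 0)\<^sup>2 + step_const K a * real 0) / real n"
    using lyap_pos[of y] by simp
qed

lemma expect_at_zhat_small: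
  assumes r: "ranked_state K x" and t: "time_threshold K a \<le> t" and small: "zhat_normsq K n x < 1"
  shows "expect_at K a n x (sqrt (zhat_normsq K n x) * t) (zhat_normsq K n)
      \<le> (real K ^ 3 / time_threshold K a + rate_const K a) * (t * sqrt (zhat_normsq K n x))"
proof -
  define \<rho> l where "\<rho> = sqrt (zhat_normsq K n x)" and "l = unif_rate K a n * (\<rho> * t)"
  have "0 \<le> \<rho>" "\<rho> < 1" "0 < t" "0 \<le> l"
    using zhat_normsq_nonneg small time_threshold_pos t unif_rate_pos unfolding \<rho>_def l_def by auto
  have "expect_at K a n x (\<rho> * t) (zhat_normsq K n)
      = (\<Sum>k. exp (- l) * l ^ k / fact k * (jump_op K a n ^^ k) (zhat_normsq K n) x)"
    unfolding expect_at_def l_def by simp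
  also have "\<dots> \<le> 0 * l + 1 / real n * l + sum_sq K x / real n"
    using \<open>0 \<le> l\<close> jump_op_iter_zhat_nonneg[OF r] jump_op_iter_zhat_le_sum_sq[OF r]
    by (intro poisson_expectation_le_quadratic) (simp_all add: add_divide_distrib add.commute)
  also have "\<dots> = rate_const K a * (t * \<rho>) + sum_sq K x / real n"
    unfolding l_def unif_rate_eq using n_ge_1 by simp
  finally have expect: "expect_at K a n x (\<rho> * t) (zhat_normsq K n)
      \<le> rate_const K a * (t * \<rho>) + sum_sq K x / real n" .
  have "sum_sq K x / real n \<le> real K ^ 3 * \<rho>\<^sup>2"
    using sum_sq_le_zhat_normsq[OF r] zhat_normsq_nonneg unfolding \<rho>_def by simp
  also have "\<dots> \<le> real K ^ 3 * (\<rho> * (t / time_threshold K a))"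
  proof (rule mult_left_mono)
    have "\<rho>\<^sup>2 \<le> \<rho>"
      using \<open>0 \<le> \<rho>\<close> \<open>\<rho> < 1\<close> by (simp add: power2_eq_square mult_left_le_one_le)
    also have "\<dots> \<le> \<rho> * (t / time_threshold K a)"
      using \<open>0 \<le> \<rho>\<close> t time_threshold_pos mult_left_mono[of 1 "t / time_threshold K a" \<rho>] by simp
    finally show "\<rho>\<^sup>2 \<le> \<rho> * (t / time_threshold K a)" .
  qed simp
  finally show ?thesis
    using expect unfolding \<rho>_def by (simp add: algebra_simps)
qed

lemma lyap_decrement_sq_le: "(lyap_decrement K a n)\<^sup>2 \<le> (drift_const K a)\<^sup>2 / (rate_const K a)\<^sup>2"
proof -
  have "(lyap_decrement K a n)\<^sup>2 = (drift_const K a)\<^sup>2 / (rate_const K a)\<^sup>2 / real n"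
    unfolding lyap_decrement_def unif_rate_eq using n_ge_1
    by (simp add: power_mult_distrib power_divide) (simp add: power2_eq_square)
  also have "\<dots> \<le> (drift_const K a)\<^sup>2 / (rate_const K a)\<^sup>2"
    using n_ge_1 rate_const_ge_2 by (intro mult_imp_div_pos_le) (auto simp: mult_le_cancel_left1)
  finally show ?thesis .
qed

lemma lyap_le_lyap_decrement_mult:
  assumes r: "ranked_state K x" and t: "time_threshold K a \<le> t" and large: "1 \<le> zhat_normsq K n x"
  shows "lyap K a n x \<le> lyap_decrement K a n * (unif_rate K a n * (sqrt (zhat_normsq K n x) * t))"
proof -
  define \<rho> where "\<rho> = sqrt (zhat_normsq K n x)"
  have "1 \<le> \<rho>" "0 < t"
    using large time_threshold_pos t unfolding \<rho>_def by auto
  have "sum_sq K x / real n \<le> real K ^ 3 * \<rho>\<^sup>2"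
    using sum_sq_le_zhat_normsq[OF r] zhat_normsq_nonneg unfolding \<rho>_def by simp
  then have "sum_sq K x \<le> real n * (real K ^ 3 * \<rho>\<^sup>2)"
    using n_ge_1 by (simp add: divide_le_eq mult.commute)
  moreover have "lyap_shift K a * real n \<le> lyap_shift K a * (real n * \<rho>\<^sup>2)"
    using \<open>1 \<le> \<rho>\<close> lyap_shift_pos n_ge_1 by (simp add: one_le_power)
  ultimately have "(lyap K a n x)\<^sup>2 \<le> real n * \<rho>\<^sup>2 * (real K ^ 3 + lyap_shift K a)"
    using lyap_sq[of x] by (simp add: algebra_simps)
  also have "\<dots> \<le> real n * \<rho>\<^sup>2 * (drift_const K a * t)\<^sup>2"
    using threshold_le_drift_const_mult[OF t] by (intro mult_left_mono) auto
  also have "\<dots> = (lyap_decrement K a n * (unif_rate K a n * (\<rho> * t)))\<^sup>2"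
    unfolding lyap_decrement_def using unif_rate_pos by (simp add: power_mult_distrib)
  finally show ?thesis
    unfolding \<rho>_def
    by (rule power2_le_imp_le)
      (use lyap_decrement_nonneg unif_rate_pos \<open>0 < t\<close> zhat_normsq_nonneg in simp)
qed

lemma jump_op_iter_zhat_le_quadratic:
  assumes r: "ranked_state K x" and lyap_le: "lyap K a n x \<le> lyap_decrement K a n * l"
  shows "(jump_op K a n ^^ k) (zhat_normsq K n) x
      \<le> (lyap_decrement K a n)\<^sup>2 / real n * (real k - l)\<^sup>2 + step_const K a / real n * real k + 0"
proof -
  let ?\<beta> = "lyap_decrement K a n"
  have "max (lyap K a n x - ?\<beta> * real k) 0 \<le> \<bar>?\<beta> * (real k - l)\<bar>"
    using lyap_le lyap_decrement_nonneg by (auto simp: algebra_simps abs_if)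
  then have "(max (lyap K a n x - ?\<beta> * real k) 0)\<^sup>2 \<le> (\<bar>?\<beta> * (real k - l)\<bar>)\<^sup>2"
    by (rule power_mono) simp
  then have "((max (lyap K a n x - ?\<beta> * real k) 0)\<^sup>2 + step_const K a * real k) / real n
      \<le> (?\<beta>\<^sup>2 * (real k - l)\<^sup>2 + step_const K a * real k) / real n"
    using n_ge_1 by (intro divide_right_mono) (auto simp: power_mult_distrib)
  then show ?thesis
    using jump_op_iter_zhat_le_lyap[OF r, of k] by (simp add: add_divide_distrib)
qed

lemma expect_at_zhat_large:
  assumes r: "ranked_state K x" and t: "time_threshold K a \<le> t" and large: "1 \<le> zhat_normsq K n x"
  shows "expect_at K a n x (sqrt (zhat_normsq K n x) * t) (zhat_normsq K n)
      \<le> ((drift_const K a)\<^sup>2 / (rate_const K a)\<^sup>2 + step_const K a) * rate_const K a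
         * (t * sqrt (zhat_normsq K n x))"
proof -
  define \<rho> l where "\<rho> = sqrt (zhat_normsq K n x)" and "l = unif_rate K a n * (\<rho> * t)"
  have "1 \<le> \<rho>" "0 < t" "0 \<le> l"
    using large time_threshold_pos t unif_rate_pos unfolding \<rho>_def l_def by auto
  have "expect_at K a n x (\<rho> * t) (zhat_normsq K n)
      = (\<Sum>k. exp (- l) * l ^ k / fact k * (jump_op K a n ^^ k) (zhat_normsq K n) x)"
    unfolding expect_at_def l_def by simp
  also have "\<dots> \<le> (lyap_decrement K a n)\<^sup>2 / real n * l + step_const K a / real n * l + 0"
    using \<open>0 \<le> l\<close> jump_op_iter_zhat_nonneg[OF r]
      jump_op_iter_zhat_le_quadratic[OF r lyap_le_lyap_decrement_mult[OF r t large]]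
    unfolding l_def \<rho>_def by (rule poisson_expectation_le_quadratic)
  also have "\<dots> = ((lyap_decrement K a n)\<^sup>2 + step_const K a) * rate_const K a * (t * \<rho>)"
    unfolding l_def unif_rate_eq using n_ge_1 by (simp add: field_simps)
  also have "\<dots> \<le> ((drift_const K a)\<^sup>2 / (rate_const K a)\<^sup>2 + step_const K a) * rate_const K a * (t * \<rho>)"
    using lyap_decrement_sq_le rate_const_ge_2 \<open>0 < t\<close> \<open>1 \<le> \<rho>\<close> by (intro mult_right_mono) auto
  finally show ?thesis
    unfolding \<rho>_def .
qed

lemma expect_at_zhat_le:
  assumes r: "ranked_state K x" and t: "time_threshold K a \<le> t"
  shows "expect_at K a n x (sqrt (zhat_normsq K n x) * t) (zhat_normsq K n)
      \<le> moment_const K a * (t * sqrt (zhat_normsq K n x))"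
proof -
  have \<tau>: "0 \<le> t * sqrt (zhat_normsq K n x)"
    using t time_threshold_pos zhat_normsq_nonneg by simp
  show ?thesis
  proof (cases "zhat_normsq K n x < 1")
    case True
    have "real K ^ 3 / time_threshold K a + rate_const K a \<le> moment_const K a"
      using rate_const_ge_2 step_const_ge_2 unfolding moment_const_def by simp
    with \<tau> show ?thesis
      using expect_at_zhat_small[OF r t True] mult_right_mono[of _ "moment_const K a"] by (meson order_trans)
  next
    case False
    have "((drift_const K a)\<^sup>2 / (rate_const K a)\<^sup>2 + step_const K a) * rate_const K a \<le> moment_const K a"
      using time_threshold_pos rate_const_ge_2 unfolding moment_const_def by simp
    with \<tau> show ?thesis
      using expect_at_zhat_large[OF r t] False mult_right_mono[of _ "moment_const K a"] by (meson not_less order_trans)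
  qed
qed

end

theorem lemma6p1:
  fixes K :: nat and a :: "nat \<Rightarrow> real"
  assumes "K \<ge> 2"
    and "\<forall>i\<in>{1..K}. (\<Sum>j=i..K. a j) > 0"
  shows "\<exists>t0 D3. t0 > 0 \<and> D3 > 0 \<and>
     (\<forall>t n x. t \<ge> t0 \<longrightarrow> admissible K a n \<longrightarrow> ranked_state K x \<longrightarrow>
        expect_at K a n x (sqrt (zhat_normsq K n x) * t) (zhat_normsq K n)
          \<le> D3 * (t * sqrt (zhat_normsq K n x)
                   + (1 + t\<^sup>2 * (zhat_normsq K n x + 1)) / real n))"
proof -
  interpret stable_rates K a
    using assms by unfold_locales simp_all
  show ?thesis
  proof (intro exI conjI allI impI)
    fix t n x
    assume t: "time_threshold K a \<le> t" and "admissible K a n" and r: "ranked_state K x"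
    then interpret stable_queue K a n
      by unfold_locales
    have "0 \<le> (1 + t\<^sup>2 * (zhat_normsq K n x + 1)) / real n"
      using zhat_normsq_nonneg by simp
    then have "moment_const K a * (t * sqrt (zhat_normsq K n x))
        \<le> moment_const K a * (t * sqrt (zhat_normsq K n x) + (1 + t\<^sup>2 * (zhat_normsq K n x + 1)) / real n)"
      using moment_const_pos by (intro mult_left_mono) auto
    then show "expect_at K a n x (sqrt (zhat_normsq K n x) * t) (zhat_normsq K n)
        \<le> moment_const K a * (t * sqrt (zhat_normsq K n x) + (1 + t\<^sup>2 * (zhat_normsq K n x + 1)) / real n)"
      using expect_at_zhat_le[OF r t] by linarith
  qed (fact time_threshold_pos moment_const_pos)+
qed

end
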